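(* Let $\mathbf{K}_1,\ldots,\mathbf{K}_M\in\mathbb{R}^{N\times N}$ be symmetric positive definite matrices, let $\epsilon>0$, $\gamma\ge0$, let $\mathbf{L}_{\mathcal G}$ be the Laplacian of an undirected weighted graph on $N$ nodes, and let $d\le N$. Consider $$\min_{\{\mathbf{A}_m\in\mathbb{R}^{N\times d}\},\,\mathbf{S}\in\mathbb{R}^{d\times N}}\ \sum_{m=1}^M\|\mathbf{A}_m^\top\mathbf{K}_m-\mathbf{S}\|_F^2+\gamma\,\mathrm{Tr}(\mathbf{S}\mathbf{L}_{\mathcal G}\mathbf{S}^\top)+\epsilon\sum_{m=1}^M\mathrm{Tr}(\mathbf{A}_m^\top\mathbf{K}_m\mathbf{A}_m)\quad\text{s.t.}\quad\mathbf{S}\mathbf{S}^\top=\mathbf{I}.$$ Let $\mathbf{C}_g:=\sum_{m=1}^M(\mathbf{K}_m+\epsilon\mathbf{I})^{-1}\mathbf{K}_m-\gamma\mathbf{L}_{\mathcal G}$ (a symmetric matrix). If $\hat{\mathbf{S}}^\top$ has as columns orthonormal eigenvectors of $\mathbf{C}_g$ associated with its $d$ largest eigenvalues, and $\hat{\mathbf{A}}_m:=(\mathbf{K}_m+\epsilon\mathbf{I})^{-1}\hat{\mathbf{S}}^\top$ for $m=1,\ldots,M$, then $(\{\hat{\mathbf{A}}_m\},\hat{\mathbf{S}})$ is a global minimizer of this problem.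
   Context: For an undirected graph on $N$ nodes with symmetric nonnegative weighted adjacency matrix $\mathbf{W}$, the Laplacian is $\mathbf{L}_{\mathcal G}:=\mathbf{D}-\mathbf{W}$, where $\mathbf{D}$ is diagonal with $i$-th diagonal entry $\sum_{j=1}^N w_{ij}$. (In the paper, $\mathbf{K}_m$ is a centered kernel matrix of the $m$-th view; with $\mathbf{K}_m=\mathbf{X}_m^\top\mathbf{X}_m$ this problem is the graph-regularized dual MCCA.) *)

theory Defs
  imports "Jordan_Normal_Form.Matrix" "Jordan_Normal_Form.Char_Poly"
begin

definition mtrace :: "real mat \<Rightarrow> real" where
  "mtrace A = (\<Sum>i<dim_row A. A $$ (i,i))"

definition frob_sq :: "real mat \<Rightarrow> real" where
  "frob_sq A = (\<Sum>i<dim_row A. \<Sum>j<dim_col A. (A $$ (i,j))\<^sup>2)"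

definition sym_pos_def :: "nat \<Rightarrow> real mat \<Rightarrow> bool" where
  "sym_pos_def N K \<longleftrightarrow> K \<in> carrier_mat N N \<and> K\<^sup>T = K \<and>
     (\<forall>v \<in> carrier_vec N. v \<noteq> 0\<^sub>v N \<longrightarrow> v \<bullet> (K *\<^sub>v v) > 0)"

definition minv :: "real mat \<Rightarrow> real mat" where
  "minv B = (SOME X. X \<in> carrier_mat (dim_row B) (dim_row B) \<and>
                     B * X = 1\<^sub>m (dim_row B) \<and> X * B = 1\<^sub>m (dim_row B))"

definition laplacian :: "real mat \<Rightarrow> real mat" where
  "laplacian W = mat (dim_row W) (dim_row W)
     (\<lambda>(i,j). (if i = j then (\<Sum>k<dim_row W. W $$ (i,k)) else 0) - W $$ (i,j))"

definition weighted_adj :: "nat \<Rightarrow> real mat \<Rightarrow> bool" where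
  "weighted_adj N W \<longleftrightarrow> W \<in> carrier_mat N N \<and> W\<^sup>T = W \<and>
     (\<forall>i<N. \<forall>j<N. W $$ (i,j) \<ge> 0)"

definition gmcca_obj ::
  "nat \<Rightarrow> (nat \<Rightarrow> real mat) \<Rightarrow> real \<Rightarrow> real \<Rightarrow> real mat \<Rightarrow> (nat \<Rightarrow> real mat) \<Rightarrow> real mat \<Rightarrow> real" where
  "gmcca_obj M K \<epsilon> \<gamma> L A S =
     (\<Sum>m\<in>{1..M}. frob_sq ((A m)\<^sup>T * K m - S))
     + \<gamma> * mtrace (S * L * S\<^sup>T)
     + \<epsilon> * (\<Sum>m\<in>{1..M}. mtrace ((A m)\<^sup>T * K m * A m))"

definition Cg :: "nat \<Rightarrow> nat \<Rightarrow> (nat \<Rightarrow> real mat) \<Rightarrow> real \<Rightarrow> real \<Rightarrow> real mat \<Rightarrow> real mat" where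
  "Cg N M K \<epsilon> \<gamma> L =
     mat N N (\<lambda>ij. \<Sum>m\<in>{1..M}. (minv (K m + \<epsilon> \<cdot>\<^sub>m 1\<^sub>m N) * K m) $$ ij)
       - \<gamma> \<cdot>\<^sub>m L"

end

theory Submission
  imports Defs
begin

text \<open>For a fixed \<open>S\<close> the objective separates over the views, and completing the square in the
  ridge problem of view \<open>m\<close> shows that its minimum over \<open>A\<^sub>m\<close> is \<open>\<epsilon> Tr(S (K\<^sub>m + \<epsilon>I)\<^sup>-\<^sup>1 S\<^sup>T)\<close>,
  attained at \<open>A\<^sub>m = (K\<^sub>m + \<epsilon>I)\<^sup>-\<^sup>1 S\<^sup>T\<close>. Since \<open>(K\<^sub>m + \<epsilon>I)\<^sup>-\<^sup>1 K\<^sub>m = I - \<epsilon>(K\<^sub>m + \<epsilon>I)\<^sup>-\<^sup>1\<close> and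
  \<open>S S\<^sup>T = I\<close>, the partially minimised objective equals \<open>M d - Tr(S C\<^sub>g S\<^sup>T)\<close>. By the Ky Fan
  argument \<open>Tr(S C\<^sub>g S\<^sup>T) = \<Sum>\<^sub>j \<lambda>\<^sub>j w\<^sub>j\<close> with weights \<open>0 \<le> w\<^sub>j \<le> 1\<close> summing to \<open>d\<close>, which is at most
  the sum of the \<open>d\<close> largest eigenvalues; the top eigenvectors attain this bound.\<close>

lemma index_mult_mat_sum:
  assumes "A \<in> carrier_mat nr n" "B \<in> carrier_mat n nc" "i < nr" "j < nc"
  shows "(A * B) $$ (i,j) = (\<Sum>k<n. A $$ (i,k) * B $$ (k,j))"
  using assms by (simp add: scalar_prod_def atLeast0LessThan)

lemma symmetric_mat_entry:
  assumes "K \<in> carrier_mat n n" "K\<^sup>T = K" "i < n" "j < n"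
  shows "K $$ (i,j) = K $$ (j,i)"
  using assms by (metis carrier_matD index_transpose_mat(1))

text \<open>Vectors are handled as coordinate functions read on \<open>{..<n}\<close>, which avoids the carrier
  bookkeeping of \<open>vec\<close> in the many index computations below.\<close>

definition dot_on :: "nat \<Rightarrow> (nat \<Rightarrow> real) \<Rightarrow> (nat \<Rightarrow> real) \<Rightarrow> real" where
  "dot_on n x y = (\<Sum>k<n. x k * y k)"

definition mat_apply :: "nat \<Rightarrow> real mat \<Rightarrow> (nat \<Rightarrow> real) \<Rightarrow> nat \<Rightarrow> real" where
  "mat_apply n X x j = (\<Sum>k<n. X $$ (j,k) * x k)"

definition quad_form :: "nat \<Rightarrow> real mat \<Rightarrow> (nat \<Rightarrow> real) \<Rightarrow> real" where
  "quad_form n X s = (\<Sum>k<n. \<Sum>l<n. s k * X $$ (k,l) * s l)"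

lemma dot_on_mat_apply_commute:
  assumes "K \<in> carrier_mat n n" "K\<^sup>T = K"
  shows "dot_on n x (mat_apply n K y) = dot_on n y (mat_apply n K x)"
proof -
  have "dot_on n x (mat_apply n K y) = (\<Sum>k<n. \<Sum>l<n. x k * K $$ (k,l) * y l)"
    by (simp add: dot_on_def mat_apply_def sum_distrib_left mult.assoc)
  also have "\<dots> = (\<Sum>l<n. \<Sum>k<n. x k * K $$ (k,l) * y l)"
    by (rule sum.swap)
  also have "\<dots> = (\<Sum>l<n. \<Sum>k<n. y l * K $$ (l,k) * x k)"
    using symmetric_mat_entry[OF assms] by (intro sum.cong refl) (simp add: mult.commute mult.left_commute)
  also have "\<dots> = dot_on n y (mat_apply n K x)"
    by (simp add: dot_on_def mat_apply_def sum_distrib_left mult.assoc)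
  finally show ?thesis .
qed

lemma dot_on_mat_apply_eq_quad_form: "dot_on n (mat_apply n X s) s = quad_form n X s"
  unfolding dot_on_def mat_apply_def quad_form_def
  by (simp add: sum_distrib_right sum_distrib_left mult.commute mult.left_commute)

lemma mat_apply_mult:
  assumes "X \<in> carrier_mat n n" "Y \<in> carrier_mat n n" "j < n"
  shows "mat_apply n X (mat_apply n Y s) j = mat_apply n (X * Y) s j"
proof -
  have "mat_apply n X (mat_apply n Y s) j = (\<Sum>k<n. \<Sum>l<n. X $$ (j,k) * Y $$ (k,l) * s l)"
    by (simp add: mat_apply_def sum_distrib_left mult.assoc)
  also have "\<dots> = (\<Sum>l<n. \<Sum>k<n. X $$ (j,k) * Y $$ (k,l) * s l)"
    by (rule sum.swap)
  also have "\<dots> = mat_apply n (X * Y) s j"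
    unfolding mat_apply_def using assms
    by (auto simp: index_mult_mat_sum[OF assms(1,2)] sum_distrib_right
        simp del: index_mult_mat intro!: sum.cong)
  finally show ?thesis .
qed

lemma mat_apply_one:
  assumes "j < n"
  shows "mat_apply n (1\<^sub>m n) s j = s j"
proof -
  have "mat_apply n (1\<^sub>m n) s j = (\<Sum>k<n. if j = k then s k else 0)"
    unfolding mat_apply_def using assms by (intro sum.cong refl) auto
  then show ?thesis using assms by simp
qed

lemma mat_apply_add_smult_one:
  assumes "K \<in> carrier_mat n n" "j < n"
  shows "mat_apply n (K + \<epsilon> \<cdot>\<^sub>m 1\<^sub>m n) x j = mat_apply n K x j + \<epsilon> * x j"
proof -
  have "mat_apply n (K + \<epsilon> \<cdot>\<^sub>m 1\<^sub>m n) x j = (\<Sum>k<n. K $$ (j,k) * x k + (if j = k then \<epsilon> * x k else 0))"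
    unfolding mat_apply_def using assms by (intro sum.cong refl) (auto simp: algebra_simps)
  also have "\<dots> = mat_apply n K x j + \<epsilon> * x j"
    using assms by (simp add: sum.distrib mat_apply_def)
  finally show ?thesis .
qed

lemma mult_mat_vec_eq_mat_apply:
  assumes "v \<in> carrier_vec n" "X \<in> carrier_mat n n" "j < n"
  shows "(X *\<^sub>v v) $ j = mat_apply n X (($) v) j"
  using assms by (simp add: scalar_prod_def atLeast0LessThan mat_apply_def)

lemma quad_form_diff_smult:
  assumes "A \<in> carrier_mat n n" "B \<in> carrier_mat n n"
  shows "quad_form n (A - c \<cdot>\<^sub>m B) s = quad_form n A s - c * quad_form n B s"
proof -
  have "quad_form n (A - c \<cdot>\<^sub>m B) s = (\<Sum>k<n. \<Sum>l<n. s k * A $$ (k,l) * s l - c * (s k * B $$ (k,l) * s l))"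
    unfolding quad_form_def using assms by (intro sum.cong refl) (simp add: algebra_simps)
  then show ?thesis
    by (simp add: quad_form_def sum_subtractf sum_distrib_left)
qed

lemma quad_form_sum_mat:
  assumes "finite I"
  shows "quad_form n (mat n n (\<lambda>ij. \<Sum>m\<in>I. F m $$ ij)) s = (\<Sum>m\<in>I. quad_form n (F m) s)"
proof -
  have "quad_form n (mat n n (\<lambda>ij. \<Sum>m\<in>I. F m $$ ij)) s = (\<Sum>k<n. \<Sum>l<n. \<Sum>m\<in>I. s k * F m $$ (k,l) * s l)"
    unfolding quad_form_def by (simp add: sum_distrib_left sum_distrib_right)
  also have "\<dots> = (\<Sum>k<n. \<Sum>m\<in>I. \<Sum>l<n. s k * F m $$ (k,l) * s l)"
    by (intro sum.cong refl) (rule sum.swap)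
  also have "\<dots> = (\<Sum>m\<in>I. quad_form n (F m) s)"
    unfolding quad_form_def by (rule sum.swap)
  finally show ?thesis .
qed

lemma quad_form_one: "quad_form n (1\<^sub>m n) s = (\<Sum>k<n. (s k)\<^sup>2)"
proof -
  have "quad_form n (1\<^sub>m n) s = (\<Sum>k<n. \<Sum>l<n. if k = l then s k * s l else 0)"
    unfolding quad_form_def by (intro sum.cong refl) auto
  then show ?thesis by (simp add: power2_eq_square)
qed

lemma mtrace_mult_transpose:
  assumes S: "S \<in> carrier_mat d n" and X: "X \<in> carrier_mat n n"
  shows "mtrace (S * X * S\<^sup>T) = (\<Sum>c<d. quad_form n X (\<lambda>k. S $$ (c,k)))"
proof -
  have SX: "S * X \<in> carrier_mat d n" using S X by simp
  have ST: "S\<^sup>T \<in> carrier_mat n d" using S by simp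
  have "(S * X * S\<^sup>T) $$ (c,c) = quad_form n X (\<lambda>k. S $$ (c,k))" if c: "c < d" for c
  proof -
    have "(S * X * S\<^sup>T) $$ (c,c) = (\<Sum>l<n. (\<Sum>k<n. S $$ (c,k) * X $$ (k,l)) * S $$ (c,l))"
      using c S by (simp add: index_mult_mat_sum[OF SX ST c c] index_mult_mat_sum[OF S X c]
          del: index_mult_mat)
    also have "\<dots> = quad_form n X (\<lambda>k. S $$ (c,k))"
      unfolding quad_form_def sum_distrib_right by (rule sum.swap)
    finally show ?thesis .
  qed
  moreover have "dim_row (S * X * S\<^sup>T) = d" using S by simp
  ultimately show ?thesis unfolding mtrace_def by simp
qed

lemma row_norm_orthonormal:
  fixes S :: "real mat"
  assumes S: "S \<in> carrier_mat d n" and SS: "S * S\<^sup>T = 1\<^sub>m d" and c: "c < d"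
  shows "(\<Sum>k<n. (S $$ (c,k))\<^sup>2) = 1"
proof -
  have "1 = (S * S\<^sup>T) $$ (c,c)" using SS c by simp
  also have "\<dots> = (\<Sum>k<n. S $$ (c,k) * S\<^sup>T $$ (k,c))"
    by (rule index_mult_mat_sum) (use S c in auto)
  also have "\<dots> = (\<Sum>k<n. (S $$ (c,k))\<^sup>2)"
    using S c by (intro sum.cong refl) (auto simp: power2_eq_square)
  finally show ?thesis by simp
qed

lemma spd_dot_on_pos:
  assumes "sym_pos_def N K" "v \<in> carrier_vec N" "v \<noteq> 0\<^sub>v N"
  shows "dot_on N (($) v) (mat_apply N K (($) v)) > 0"
proof -
  have K: "K \<in> carrier_mat N N" using assms unfolding sym_pos_def_def by auto
  have "0 < v \<bullet> (K *\<^sub>v v)" using assms unfolding sym_pos_def_def by auto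
  also have "v \<bullet> (K *\<^sub>v v) = dot_on N (($) v) (mat_apply N K (($) v))"
    using K assms(2) by (simp add: scalar_prod_def atLeast0LessThan dot_on_def
        mult_mat_vec_eq_mat_apply[OF assms(2) K] del: index_mult_mat_vec)
  finally show ?thesis .
qed

lemma spd_dot_on_nonneg:
  assumes "sym_pos_def N K"
  shows "dot_on N x (mat_apply N K x) \<ge> 0"
proof (cases "vec N x = 0\<^sub>v N")
  case True
  then have "\<forall>k<N. x k = 0" by (metis index_vec index_zero_vec(1))
  then show ?thesis unfolding dot_on_def by simp
next
  case False
  have "dot_on N x (mat_apply N K x) = dot_on N (($) (vec N x)) (mat_apply N K (($) (vec N x)))"
    unfolding dot_on_def mat_apply_def by (intro sum.cong refl) simp_all
  then show ?thesis using spd_dot_on_pos[OF assms _ False] by simp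
qed

lemma spd_shift_invertible:
  assumes "sym_pos_def N K" "\<epsilon> > 0"
  shows "\<exists>X. X \<in> carrier_mat N N \<and> (K + \<epsilon> \<cdot>\<^sub>m 1\<^sub>m N) * X = 1\<^sub>m N \<and> X * (K + \<epsilon> \<cdot>\<^sub>m 1\<^sub>m N) = 1\<^sub>m N"
proof -
  have K: "K \<in> carrier_mat N N" using assms unfolding sym_pos_def_def by auto
  define B where "B = K + \<epsilon> \<cdot>\<^sub>m 1\<^sub>m N"
  have B: "B \<in> carrier_mat N N" unfolding B_def using K by auto
  have "det B \<noteq> 0"
  proof
    assume "det B = 0"
    then obtain v where v: "v \<in> carrier_vec N" "v \<noteq> 0\<^sub>v N" "B *\<^sub>v v = 0\<^sub>v N"
      using det_0_iff_vec_prod_zero[OF B] by auto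
    have "0 = dot_on N (($) v) (\<lambda>j. (B *\<^sub>v v) $ j)"
      unfolding dot_on_def using v by simp
    also have "\<dots> = dot_on N (($) v) (\<lambda>j. mat_apply N K (($) v) j + \<epsilon> * v $ j)"
      unfolding dot_on_def B_def using K v
      by (intro sum.cong refl) (simp add: mult_mat_vec_eq_mat_apply[OF v(1)] mat_apply_add_smult_one
          del: index_mult_mat_vec)
    also have "\<dots> = dot_on N (($) v) (mat_apply N K (($) v)) + \<epsilon> * (\<Sum>j<N. (v $ j)\<^sup>2)"
      by (simp add: dot_on_def sum.distrib sum_distrib_left algebra_simps power2_eq_square)
    also have "\<dots> > 0"
      using spd_dot_on_pos[OF assms(1) v(1,2)] assms(2) by (simp add: add_pos_nonneg sum_nonneg)
    finally show False by simp
  qed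
  from det_non_zero_imp_unit[OF B this, of undefined]
  show ?thesis unfolding B_def[symmetric] Units_def ring_mat_def by auto
qed

lemma minv_shift:
  assumes "sym_pos_def N K" "\<epsilon> > 0"
  shows "minv (K + \<epsilon> \<cdot>\<^sub>m 1\<^sub>m N) \<in> carrier_mat N N"
    and "(K + \<epsilon> \<cdot>\<^sub>m 1\<^sub>m N) * minv (K + \<epsilon> \<cdot>\<^sub>m 1\<^sub>m N) = 1\<^sub>m N"
    and "minv (K + \<epsilon> \<cdot>\<^sub>m 1\<^sub>m N) * (K + \<epsilon> \<cdot>\<^sub>m 1\<^sub>m N) = 1\<^sub>m N"
  using someI_ex[OF spd_shift_invertible[OF assms]] unfolding minv_def by auto

lemma minv_shift_mult:
  assumes "sym_pos_def N K" "\<epsilon> > 0"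
  shows "minv (K + \<epsilon> \<cdot>\<^sub>m 1\<^sub>m N) * K = 1\<^sub>m N - \<epsilon> \<cdot>\<^sub>m minv (K + \<epsilon> \<cdot>\<^sub>m 1\<^sub>m N)"
proof -
  define Bi where "Bi = minv (K + \<epsilon> \<cdot>\<^sub>m 1\<^sub>m N)"
  have K: "K \<in> carrier_mat N N" using assms unfolding sym_pos_def_def by auto
  have Bi: "Bi \<in> carrier_mat N N" unfolding Bi_def by (rule minv_shift(1)[OF assms])
  have "1\<^sub>m N = Bi * (K + \<epsilon> \<cdot>\<^sub>m 1\<^sub>m N)" unfolding Bi_def by (rule minv_shift(3)[OF assms, symmetric])
  also have "\<dots> = Bi * K + \<epsilon> \<cdot>\<^sub>m Bi"
    using Bi K mult_smult_distrib[OF Bi one_carrier_mat, of \<epsilon>]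
    by (simp add: mult_add_distrib_mat)
  finally show ?thesis
    unfolding Bi_def[symmetric] using Bi K by auto
qed

lemma completed_square:
  fixes a a' s :: "nat \<Rightarrow> real"
  assumes K: "K \<in> carrier_mat n n" "K\<^sup>T = K"
    and a': "\<And>j. j < n \<Longrightarrow> mat_apply n K a' j + \<epsilon> * a' j = s j"
  defines "e \<equiv> \<lambda>k. a k - a' k"
  shows "(\<Sum>j<n. (mat_apply n K a j - s j)\<^sup>2) + \<epsilon> * dot_on n a (mat_apply n K a)
       = \<epsilon> * dot_on n a' s + (\<Sum>j<n. (mat_apply n K e j)\<^sup>2) + \<epsilon> * dot_on n e (mat_apply n K e)"
proof -
  have Ka: "mat_apply n K a j = mat_apply n K a' j + mat_apply n K e j" for j
    unfolding mat_apply_def e_def by (simp add: sum.distrib[symmetric] algebra_simps)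
  define X where "X = (\<Sum>j<n. (mat_apply n K e j)\<^sup>2)"
  define Y where "Y = dot_on n a' (mat_apply n K e)"
  define Z where "Z = (\<Sum>j<n. (a' j)\<^sup>2)"
  define Q where "Q = dot_on n a' (mat_apply n K a')"
  define V where "V = dot_on n e (mat_apply n K e)"
  have "(\<Sum>j<n. (mat_apply n K a j - s j)\<^sup>2)
      = (\<Sum>j<n. (mat_apply n K e j)\<^sup>2 - 2 * \<epsilon> * (a' j * mat_apply n K e j) + \<epsilon>\<^sup>2 * (a' j)\<^sup>2)"
  proof (intro sum.cong refl)
    fix j assume "j \<in> {..<n}"
    then have "mat_apply n K a j - s j = mat_apply n K e j - \<epsilon> * a' j"
      using a' Ka by (simp add: algebra_simps)
    then show "(mat_apply n K a j - s j)\<^sup>2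
        = (mat_apply n K e j)\<^sup>2 - 2 * \<epsilon> * (a' j * mat_apply n K e j) + \<epsilon>\<^sup>2 * (a' j)\<^sup>2"
      by (simp only: power2_eq_square) (simp add: algebra_simps)
  qed
  also have "\<dots> = X - 2 * \<epsilon> * Y + \<epsilon>\<^sup>2 * Z"
    by (simp add: X_def Y_def Z_def dot_on_def sum.distrib sum_subtractf sum_distrib_left)
  finally have residual: "(\<Sum>j<n. (mat_apply n K a j - s j)\<^sup>2) = X - 2 * \<epsilon> * Y + \<epsilon>\<^sup>2 * Z" .
  have "dot_on n a (mat_apply n K a) = Q + Y + dot_on n e (mat_apply n K a') + V"
    by (simp add: Q_def Y_def V_def dot_on_def Ka e_def sum.distrib[symmetric] algebra_simps)
  also have "dot_on n e (mat_apply n K a') = Y"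
    unfolding Y_def by (rule dot_on_mat_apply_commute[OF K])
  finally have penalty: "dot_on n a (mat_apply n K a) = Q + 2 * Y + V" by simp
  have "dot_on n a' s = (\<Sum>j<n. a' j * (mat_apply n K a' j + \<epsilon> * a' j))"
    unfolding dot_on_def using a' by simp
  then have "dot_on n a' s = (\<Sum>j<n. a' j * mat_apply n K a' j + \<epsilon> * (a' j)\<^sup>2)"
    by (simp add: power2_eq_square algebra_simps)
  then have optimum: "dot_on n a' s = Q + \<epsilon> * Z"
    by (simp add: Q_def Z_def dot_on_def sum.distrib sum_distrib_left)
  \<comment> \<open>The cross terms \<open>-2\<epsilon>Y\<close> of the residual and \<open>+2\<epsilon>Y\<close> of the penalty cancel.\<close>
  show ?thesis
    unfolding residual penalty optimum X_def[symmetric] V_def[symmetric]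
    by (simp add: algebra_simps power2_eq_square)
qed

lemma ridge_column_identity:
  fixes a s :: "nat \<Rightarrow> real"
  assumes spd: "sym_pos_def N K" and eps: "\<epsilon> > 0"
  defines "Bi \<equiv> minv (K + \<epsilon> \<cdot>\<^sub>m 1\<^sub>m N)"
  defines "e \<equiv> \<lambda>k. a k - mat_apply N Bi s k"
  shows "(\<Sum>j<N. (mat_apply N K a j - s j)\<^sup>2) + \<epsilon> * dot_on N a (mat_apply N K a)
       = \<epsilon> * quad_form N Bi s + (\<Sum>j<N. (mat_apply N K e j)\<^sup>2) + \<epsilon> * dot_on N e (mat_apply N K e)"
proof -
  have K: "K \<in> carrier_mat N N" "K\<^sup>T = K" using spd unfolding sym_pos_def_def by auto
  have B: "K + \<epsilon> \<cdot>\<^sub>m 1\<^sub>m N \<in> carrier_mat N N" using K by simp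
  have "mat_apply N K (mat_apply N Bi s) j + \<epsilon> * mat_apply N Bi s j = s j" if j: "j < N" for j
  proof -
    have "mat_apply N K (mat_apply N Bi s) j + \<epsilon> * mat_apply N Bi s j
        = mat_apply N (K + \<epsilon> \<cdot>\<^sub>m 1\<^sub>m N) (mat_apply N Bi s) j"
      by (rule mat_apply_add_smult_one[OF K(1) j, symmetric])
    also have "\<dots> = mat_apply N ((K + \<epsilon> \<cdot>\<^sub>m 1\<^sub>m N) * Bi) s j"
      unfolding Bi_def by (rule mat_apply_mult[OF B minv_shift(1)[OF spd eps] j])
    also have "\<dots> = s j"
      unfolding Bi_def minv_shift(2)[OF spd eps] by (rule mat_apply_one[OF j])
    finally show ?thesis .
  qed
  from completed_square[OF K this, of a]
  show ?thesis unfolding e_def dot_on_mat_apply_eq_quad_form by simp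
qed

definition view_cost :: "real mat \<Rightarrow> real \<Rightarrow> real mat \<Rightarrow> real mat \<Rightarrow> real" where
  "view_cost K \<epsilon> A S = frob_sq (A\<^sup>T * K - S) + \<epsilon> * mtrace (A\<^sup>T * K * A)"

lemma view_cost_column_sum:
  assumes K: "K \<in> carrier_mat N N" "K\<^sup>T = K" and A: "A \<in> carrier_mat N d" and S: "S \<in> carrier_mat d N"
  shows "view_cost K \<epsilon> A S =
    (\<Sum>c<d. (\<Sum>j<N. (mat_apply N K (\<lambda>k. A $$ (k,c)) j - S $$ (c,j))\<^sup>2)
       + \<epsilon> * dot_on N (\<lambda>k. A $$ (k,c)) (mat_apply N K (\<lambda>k. A $$ (k,c))))"
proof -
  have AT: "A\<^sup>T \<in> carrier_mat d N" using A by simp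
  have AK: "A\<^sup>T * K \<in> carrier_mat d N" using AT K by simp
  have AK_entry: "(A\<^sup>T * K) $$ (c,j) = mat_apply N K (\<lambda>k. A $$ (k,c)) j" if "c < d" "j < N" for c j
    unfolding index_mult_mat_sum[OF AT K(1) that] mat_apply_def
    using that A symmetric_mat_entry[OF K] by (intro sum.cong refl) auto
  have frob: "frob_sq (A\<^sup>T * K - S) = (\<Sum>c<d. \<Sum>j<N. (mat_apply N K (\<lambda>k. A $$ (k,c)) j - S $$ (c,j))\<^sup>2)"
    unfolding frob_sq_def using S AK by (auto simp: AK_entry intro!: sum.cong)
  have "(A\<^sup>T * K * A) $$ (c,c) = dot_on N (\<lambda>k. A $$ (k,c)) (mat_apply N K (\<lambda>k. A $$ (k,c)))"
    if "c < d" for c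
    unfolding index_mult_mat_sum[OF AK A that that] dot_on_def
    using that by (intro sum.cong refl) (simp add: AK_entry mult.commute)
  then have trace: "mtrace (A\<^sup>T * K * A) = (\<Sum>c<d. dot_on N (\<lambda>k. A $$ (k,c)) (mat_apply N K (\<lambda>k. A $$ (k,c))))"
    unfolding mtrace_def using AK A by simp
  show ?thesis
    unfolding view_cost_def frob trace by (simp add: sum.distrib sum_distrib_left)
qed

lemma view_cost_ge:
  assumes spd: "sym_pos_def N K" and eps: "\<epsilon> > 0"
    and A: "A \<in> carrier_mat N d" and S: "S \<in> carrier_mat d N"
  shows "\<epsilon> * (\<Sum>c<d. quad_form N (minv (K + \<epsilon> \<cdot>\<^sub>m 1\<^sub>m N)) (\<lambda>k. S $$ (c,k))) \<le> view_cost K \<epsilon> A S"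
proof -
  have K: "K \<in> carrier_mat N N" "K\<^sup>T = K" using spd unfolding sym_pos_def_def by auto
  show ?thesis
    unfolding view_cost_column_sum[OF K A S] sum_distrib_left ridge_column_identity[OF spd eps]
    using spd_dot_on_nonneg[OF spd] eps by (intro sum_mono) (simp add: sum_nonneg)
qed

lemma view_cost_ridge:
  assumes spd: "sym_pos_def N K" and eps: "\<epsilon> > 0" and S: "S \<in> carrier_mat d N"
  defines "Bi \<equiv> minv (K + \<epsilon> \<cdot>\<^sub>m 1\<^sub>m N)"
  shows "view_cost K \<epsilon> (Bi * S\<^sup>T) S = \<epsilon> * (\<Sum>c<d. quad_form N Bi (\<lambda>k. S $$ (c,k)))"
proof -
  have K: "K \<in> carrier_mat N N" "K\<^sup>T = K" using spd unfolding sym_pos_def_def by auto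
  have Bi: "Bi \<in> carrier_mat N N" unfolding Bi_def by (rule minv_shift(1)[OF spd eps])
  have A: "Bi * S\<^sup>T \<in> carrier_mat N d" using Bi S by simp
  have col: "(Bi * S\<^sup>T) $$ (k,c) = mat_apply N Bi (\<lambda>k. S $$ (c,k)) k" if "c < d" "k < N" for c k
  proof -
    have "(Bi * S\<^sup>T) $$ (k,c) = (\<Sum>l<N. Bi $$ (k,l) * S\<^sup>T $$ (l,c))"
      by (rule index_mult_mat_sum[OF Bi]) (use S that in auto)
    then show ?thesis using S that by (simp add: mat_apply_def)
  qed
  let ?e = "\<lambda>c k. (Bi * S\<^sup>T) $$ (k,c) - mat_apply N Bi (\<lambda>k. S $$ (c,k)) k"
  have "mat_apply N K (?e c) j = 0" and "dot_on N (?e c) y = 0" if "c < d" for c j y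
    unfolding mat_apply_def[of N K] dot_on_def using that by (simp_all add: col)
  then show ?thesis
    unfolding view_cost_column_sum[OF K A S] sum_distrib_left
      ridge_column_identity[OF spd eps, folded Bi_def]
    by (intro sum.cong refl) simp
qed

lemma quad_form_Cg:
  assumes K: "\<forall>m\<in>{1..M}. sym_pos_def N (K m)" and eps: "\<epsilon> > 0" and L: "L \<in> carrier_mat N N"
  shows "quad_form N (Cg N M K \<epsilon> \<gamma> L) s =
    real M * (\<Sum>k<N. (s k)\<^sup>2) - \<epsilon> * (\<Sum>m\<in>{1..M}. quad_form N (minv (K m + \<epsilon> \<cdot>\<^sub>m 1\<^sub>m N)) s)
      - \<gamma> * quad_form N L s"
proof -
  let ?Bi = "\<lambda>m. minv (K m + \<epsilon> \<cdot>\<^sub>m 1\<^sub>m N)"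
  have "quad_form N (?Bi m * K m) s = (\<Sum>k<N. (s k)\<^sup>2) - \<epsilon> * quad_form N (?Bi m) s"
    if "m \<in> {1..M}" for m
    using K that minv_shift(1)[OF _ eps]
    by (simp add: minv_shift_mult[OF _ eps] quad_form_diff_smult quad_form_one)
  then show ?thesis
    unfolding Cg_def using L
    by (simp add: quad_form_diff_smult quad_form_sum_mat sum_subtractf sum_distrib_left)
qed

lemma trace_Cg:
  assumes K: "\<forall>m\<in>{1..M}. sym_pos_def N (K m)" and eps: "\<epsilon> > 0" and L: "L \<in> carrier_mat N N"
    and S: "S \<in> carrier_mat d N" and SS: "S * S\<^sup>T = 1\<^sub>m d"
  shows "(\<Sum>c<d. quad_form N (Cg N M K \<epsilon> \<gamma> L) (\<lambda>k. S $$ (c,k))) =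
     real M * real d
     - \<epsilon> * (\<Sum>m\<in>{1..M}. \<Sum>c<d. quad_form N (minv (K m + \<epsilon> \<cdot>\<^sub>m 1\<^sub>m N)) (\<lambda>k. S $$ (c,k)))
     - \<gamma> * (\<Sum>c<d. quad_form N L (\<lambda>k. S $$ (c,k)))"
proof -
  let ?q = "\<lambda>m c. quad_form N (minv (K m + \<epsilon> \<cdot>\<^sub>m 1\<^sub>m N)) (\<lambda>k. S $$ (c,k))"
  have "(\<Sum>c<d. quad_form N (Cg N M K \<epsilon> \<gamma> L) (\<lambda>k. S $$ (c,k)))
      = (\<Sum>c<d. real M - \<epsilon> * (\<Sum>m\<in>{1..M}. ?q m c) - \<gamma> * quad_form N L (\<lambda>k. S $$ (c,k)))"
    using row_norm_orthonormal[OF S SS] by (simp add: quad_form_Cg[OF K eps L])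
  also have "(\<Sum>c<d. \<Sum>m\<in>{1..M}. ?q m c) = (\<Sum>m\<in>{1..M}. \<Sum>c<d. ?q m c)"
    by (rule sum.swap)
  ultimately show ?thesis
    by (simp add: sum_subtractf sum_distrib_left[symmetric])
qed

lemma gmcca_obj_view_costs:
  assumes "S \<in> carrier_mat d N" "L \<in> carrier_mat N N"
  shows "gmcca_obj M K \<epsilon> \<gamma> L A S =
    (\<Sum>m\<in>{1..M}. view_cost (K m) \<epsilon> (A m) S) + \<gamma> * (\<Sum>c<d. quad_form N L (\<lambda>k. S $$ (c,k)))"
  unfolding gmcca_obj_def view_cost_def mtrace_mult_transpose[OF assms]
  by (simp add: sum.distrib sum_distrib_left)

lemma gmcca_obj_ge:
  assumes K: "\<forall>m\<in>{1..M}. sym_pos_def N (K m)" and eps: "\<epsilon> > 0" and L: "L \<in> carrier_mat N N"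
    and S: "S \<in> carrier_mat d N" and SS: "S * S\<^sup>T = 1\<^sub>m d"
    and A: "\<forall>m\<in>{1..M}. A m \<in> carrier_mat N d"
  shows "real M * real d - (\<Sum>c<d. quad_form N (Cg N M K \<epsilon> \<gamma> L) (\<lambda>k. S $$ (c,k)))
    \<le> gmcca_obj M K \<epsilon> \<gamma> L A S"
proof -
  have "\<epsilon> * (\<Sum>m\<in>{1..M}. \<Sum>c<d. quad_form N (minv (K m + \<epsilon> \<cdot>\<^sub>m 1\<^sub>m N)) (\<lambda>k. S $$ (c,k)))
      \<le> (\<Sum>m\<in>{1..M}. view_cost (K m) \<epsilon> (A m) S)"
    unfolding sum_distrib_left[of \<epsilon> _ "{1..M}"] using K A by (intro sum_mono view_cost_ge[OF _ eps _ S]) auto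
  then show ?thesis
    unfolding gmcca_obj_view_costs[OF S L] trace_Cg[OF K eps L S SS] by simp
qed

lemma gmcca_obj_ridge:
  assumes K: "\<forall>m\<in>{1..M}. sym_pos_def N (K m)" and eps: "\<epsilon> > 0" and L: "L \<in> carrier_mat N N"
    and S: "S \<in> carrier_mat d N" and SS: "S * S\<^sup>T = 1\<^sub>m d"
  shows "gmcca_obj M K \<epsilon> \<gamma> L (\<lambda>m. minv (K m + \<epsilon> \<cdot>\<^sub>m 1\<^sub>m N) * S\<^sup>T) S
    = real M * real d - (\<Sum>c<d. quad_form N (Cg N M K \<epsilon> \<gamma> L) (\<lambda>k. S $$ (c,k)))"
  unfolding gmcca_obj_view_costs[OF S L] trace_Cg[OF K eps L S SS]
  using K by (simp add: view_cost_ridge[OF _ eps S] sum_distrib_left)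

lemma orthonormal_columns:
  fixes U :: "real mat"
  assumes U: "U \<in> carrier_mat N N" and UtU: "U\<^sup>T * U = 1\<^sub>m N" and "c < N" "j < N"
  shows "(\<Sum>k<N. U $$ (k,c) * U $$ (k,j)) = (if c = j then 1 else 0)"
proof -
  have "(U\<^sup>T * U) $$ (c,j) = (\<Sum>k<N. U\<^sup>T $$ (c,k) * U $$ (k,j))"
    by (rule index_mult_mat_sum) (use U assms(3,4) in auto)
  then show ?thesis using U UtU assms(3,4) by simp
qed

lemma eigenbasis_entry:
  fixes C U :: "real mat"
  assumes C: "C \<in> carrier_mat N N" and U: "U \<in> carrier_mat N N" and UtU: "U\<^sup>T * U = 1\<^sub>m N"
    and eig: "\<forall>i<N. eigenvector C (col U i) (lam i)" and k: "k < N" and l: "l < N"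
  shows "C $$ (k,l) = (\<Sum>j<N. lam j * U $$ (k,j) * U $$ (l,j))"
proof -
  have UT: "U\<^sup>T \<in> carrier_mat N N" using U by simp
  have CU: "(C * U) $$ (k,j) = lam j * U $$ (k,j)" if j: "j < N" for j
  proof -
    have "col (C * U) j = lam j \<cdot>\<^sub>v col U j"
      using col_mult2[OF C U j] eig j unfolding eigenvector_def by auto
    then have "col (C * U) j $ k = (lam j \<cdot>\<^sub>v col U j) $ k" by simp
    then show ?thesis using j k U C by simp
  qed
  have "C = (C * U) * U\<^sup>T"
    using C U UT mat_mult_left_right_inverse[OF UT U UtU] by simp
  then have "C $$ (k,l) = (\<Sum>j<N. (C * U) $$ (k,j) * U\<^sup>T $$ (j,l))"
    using index_mult_mat_sum[OF _ UT k l, of "C * U"] C U by simp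
  also have "\<dots> = (\<Sum>j<N. lam j * U $$ (k,j) * U $$ (l,j))"
    using U l by (intro sum.cong refl) (simp add: CU del: index_mult_mat)
  finally show ?thesis .
qed

lemma quad_form_eigenbasis:
  fixes C U :: "real mat"
  assumes C: "C \<in> carrier_mat N N" and U: "U \<in> carrier_mat N N" and UtU: "U\<^sup>T * U = 1\<^sub>m N"
    and eig: "\<forall>i<N. eigenvector C (col U i) (lam i)"
  shows "quad_form N C s = (\<Sum>j<N. lam j * (\<Sum>k<N. s k * U $$ (k,j))\<^sup>2)"
proof -
  define f where "f k l j = lam j * ((s k * U $$ (k,j)) * (s l * U $$ (l,j)))" for k l j
  have "quad_form N C s = (\<Sum>k<N. \<Sum>l<N. \<Sum>j<N. f k l j)"
    unfolding quad_form_def f_def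
    by (intro sum.cong refl)
      (simp add: eigenbasis_entry[OF C U UtU eig] sum_distrib_left sum_distrib_right mult_ac)
  also have "\<dots> = (\<Sum>k<N. \<Sum>j<N. \<Sum>l<N. f k l j)"
    by (rule sum.cong[OF refl]) (rule sum.swap)
  also have "\<dots> = (\<Sum>j<N. \<Sum>k<N. \<Sum>l<N. f k l j)"
    by (rule sum.swap)
  also have "\<dots> = (\<Sum>j<N. lam j * (\<Sum>k<N. s k * U $$ (k,j))\<^sup>2)"
    unfolding f_def power2_eq_square sum_product by (simp add: sum_distrib_left)
  finally show ?thesis .
qed

lemma orthonormal_rows_mult:
  fixes S U :: "real mat"
  assumes S: "S \<in> carrier_mat d N" and SS: "S * S\<^sup>T = 1\<^sub>m d"
    and U: "U \<in> carrier_mat N N" and UtU: "U\<^sup>T * U = 1\<^sub>m N"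
  shows "(S * U) * (S * U)\<^sup>T = 1\<^sub>m d"
proof -
  have UT: "U\<^sup>T \<in> carrier_mat N N" using U by simp
  have ST: "S\<^sup>T \<in> carrier_mat N d" using S by simp
  have "(S * U) * (S * U)\<^sup>T = S * (U * (U\<^sup>T * S\<^sup>T))"
    unfolding transpose_mult[OF S U] by (rule assoc_mult_mat[OF S U mult_carrier_mat[OF UT ST]])
  also have "U * (U\<^sup>T * S\<^sup>T) = S\<^sup>T"
    unfolding assoc_mult_mat[OF U UT ST, symmetric] mat_mult_left_right_inverse[OF UT U UtU]
    using ST by simp
  finally show ?thesis using SS by simp
qed

text \<open>\<open>Y\<^sup>T Y\<close> is a symmetric idempotent, so its diagonal entry \<open>p = \<Sum>\<^sub>c Y\<^sub>c\<^sub>j\<^sup>2\<close> is the squared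
  norm of its \<open>j\<close>-th row and hence \<open>p \<ge> p\<^sup>2\<close>.\<close>

lemma col_norm_orthonormal_rows_le:
  fixes Y :: "real mat"
  assumes Y: "Y \<in> carrier_mat d n" and YY: "Y * Y\<^sup>T = 1\<^sub>m d" and j: "j < n"
  shows "(\<Sum>c<d. (Y $$ (c,j))\<^sup>2) \<le> 1"
proof -
  define P where "P = Y\<^sup>T * Y"
  have YT: "Y\<^sup>T \<in> carrier_mat n d" using Y by simp
  have P: "P \<in> carrier_mat n n" unfolding P_def using Y by simp
  have P_entry: "P $$ (i,k) = (\<Sum>c<d. Y $$ (c,i) * Y $$ (c,k))" if "i < n" "k < n" for i k
    unfolding P_def index_mult_mat_sum[OF YT Y that] using that Y by simp
  have "P * P = Y\<^sup>T * ((Y * Y\<^sup>T) * Y)"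
    unfolding P_def using Y YT by (simp add: assoc_mult_mat[of _ n d _ n _ n] assoc_mult_mat[of _ d n _ d _ n])
  then have PP: "P * P = P" unfolding YY P_def using Y by simp
  define p where "p = P $$ (j,j)"
  have "p = (\<Sum>k<n. P $$ (j,k) * P $$ (k,j))"
    unfolding p_def using index_mult_mat_sum[OF P P j j] PP by simp
  also have "\<dots> = (\<Sum>k<n. (P $$ (j,k))\<^sup>2)"
    using j by (intro sum.cong refl) (simp add: P_entry power2_eq_square mult.commute)
  also have "\<dots> \<ge> p\<^sup>2"
    unfolding p_def by (rule member_le_sum) (use j in auto)
  finally have "p\<^sup>2 \<le> p" .
  then have "p \<le> 1" by (auto simp: power2_eq_square intro: ccontr)
  then show ?thesis
    unfolding p_def using j by (simp add: P_entry power2_eq_square)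
qed

lemma sum_col_norms_orthonormal_rows:
  fixes Y :: "real mat"
  assumes Y: "Y \<in> carrier_mat d n" and YY: "Y * Y\<^sup>T = 1\<^sub>m d"
  shows "(\<Sum>j<n. \<Sum>c<d. (Y $$ (c,j))\<^sup>2) = real d"
  by (subst sum.swap) (simp add: row_norm_orthonormal[OF Y YY])

text \<open>The pivot \<open>\<mu>\<close> separates the \<open>d\<close> leading values of \<open>\<lambda>\<close> from the others, so every term of
  \<open>\<Sum>\<^sub>j (\<lambda>\<^sub>j - \<mu>) (w\<^sub>j - [j < d])\<close> is nonpositive.\<close>

lemma weighted_sum_le_leading_sum:
  fixes lam w :: "nat \<Rightarrow> real"
  assumes dN: "d \<le> N" and w: "\<And>j. j < N \<Longrightarrow> 0 \<le> w j \<and> w j \<le> 1" and w_sum: "(\<Sum>j<N. w j) = real d"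
    and sorted: "\<forall>i<N. \<forall>j<N. i \<le> j \<longrightarrow> lam j \<le> lam i"
  shows "(\<Sum>j<N. lam j * w j) \<le> (\<Sum>j<d. lam j)"
proof -
  define ind where "ind j = (if j < d then 1 else 0 :: real)" for j
  define \<mu> where "\<mu> = (if d < N then lam d else lam (N - 1))"
  have truncate: "(\<Sum>j<N. f j * ind j) = (\<Sum>j<d. f j)" for f :: "nat \<Rightarrow> real"
  proof -
    have "(\<Sum>j<N. f j * ind j) = (\<Sum>j<d. f j * ind j)"
      by (rule sum.mono_neutral_right) (use dN in \<open>auto simp: ind_def\<close>)
    then show ?thesis by (simp add: ind_def)
  qed
  have leading: "(\<Sum>j<d. lam j) = (\<Sum>j<N. lam j * ind j)"
    by (rule truncate[symmetric])
  have ind_sum: "(\<Sum>j<N. ind j) = real d"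
    using truncate[of "\<lambda>_. 1"] by simp
  have "(\<Sum>j<N. lam j * (w j - ind j)) \<le> (\<Sum>j<N. \<mu> * (w j - ind j))"
  proof (rule sum_mono)
    fix j assume j: "j \<in> {..<N}"
    show "lam j * (w j - ind j) \<le> \<mu> * (w j - ind j)"
    proof (cases "j < d")
      case True
      then have "\<mu> \<le> lam j" using j sorted dN unfolding \<mu>_def by (cases "d < N") auto
      then show ?thesis using True w j by (simp add: ind_def mult_right_mono_neg)
    next
      case False
      then have "lam j \<le> \<mu>" using j sorted dN unfolding \<mu>_def by (cases "d < N") auto
      then show ?thesis using False w j by (simp add: ind_def mult_right_mono)
    qed
  qed
  also have "\<dots> = 0"
    using w_sum ind_sum by (simp add: sum_subtractf sum_distrib_left[symmetric])
  finally show ?thesis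
    unfolding leading by (simp add: sum_subtractf right_diff_distrib)
qed

theorem ky_fan_trace_le:
  fixes C U S :: "real mat"
  assumes C: "C \<in> carrier_mat N N" and U: "U \<in> carrier_mat N N" and UtU: "U\<^sup>T * U = 1\<^sub>m N"
    and eig: "\<forall>i<N. eigenvector C (col U i) (lam i)"
    and sorted: "\<forall>i<N. \<forall>j<N. i \<le> j \<longrightarrow> lam j \<le> lam i" and dN: "d \<le> N"
    and S: "S \<in> carrier_mat d N" and SS: "S * S\<^sup>T = 1\<^sub>m d"
  shows "(\<Sum>c<d. quad_form N C (\<lambda>k. S $$ (c,k))) \<le> (\<Sum>j<d. lam j)"
proof -
  define Y where "Y = S * U"
  have Y: "Y \<in> carrier_mat d N" unfolding Y_def using S U by simp
  have YY: "Y * Y\<^sup>T = 1\<^sub>m d" unfolding Y_def by (rule orthonormal_rows_mult[OF S SS U UtU])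
  have "(\<Sum>c<d. quad_form N C (\<lambda>k. S $$ (c,k))) = (\<Sum>c<d. \<Sum>j<N. lam j * (Y $$ (c,j))\<^sup>2)"
    unfolding quad_form_eigenbasis[OF C U UtU eig] Y_def
    by (intro sum.cong refl) (simp add: index_mult_mat_sum[OF S U])
  also have "\<dots> = (\<Sum>j<N. lam j * (\<Sum>c<d. (Y $$ (c,j))\<^sup>2))"
    unfolding sum_distrib_left by (rule sum.swap)
  also have "\<dots> \<le> (\<Sum>j<d. lam j)"
    using col_norm_orthonormal_rows_le[OF Y YY] sum_col_norms_orthonormal_rows[OF Y YY]
    by (intro weighted_sum_le_leading_sum[OF dN _ _ sorted]) (auto intro: sum_nonneg)
  finally show ?thesis .
qed

lemma leading_eigenvectors_orthonormal:
  fixes S U :: "real mat"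
  assumes U: "U \<in> carrier_mat N N" and UtU: "U\<^sup>T * U = 1\<^sub>m N" and dN: "d \<le> N"
    and S: "S \<in> carrier_mat d N" and S_entry: "\<And>c k. c < d \<Longrightarrow> k < N \<Longrightarrow> S $$ (c,k) = U $$ (k,c)"
  shows "S * S\<^sup>T = 1\<^sub>m d"
proof (rule eq_matI)
  fix c c' assume "c < dim_row (1\<^sub>m d)" "c' < dim_col (1\<^sub>m d)"
  then have c: "c < d" "c' < d" by auto
  have "(S * S\<^sup>T) $$ (c,c') = (\<Sum>k<N. S $$ (c,k) * S\<^sup>T $$ (k,c'))"
    by (rule index_mult_mat_sum[OF S _ c]) (use S in simp)
  also have "\<dots> = (\<Sum>k<N. U $$ (k,c) * U $$ (k,c'))"
    using S c by (intro sum.cong refl) (simp add: S_entry)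
  finally have "(S * S\<^sup>T) $$ (c,c') = (\<Sum>k<N. U $$ (k,c) * U $$ (k,c'))" .
  then show "(S * S\<^sup>T) $$ (c,c') = 1\<^sub>m d $$ (c,c')"
    using orthonormal_columns[OF U UtU, of c c'] c dN by simp
qed (use S in auto)

lemma trace_leading_eigenvectors:
  fixes C S U :: "real mat"
  assumes C: "C \<in> carrier_mat N N" and U: "U \<in> carrier_mat N N" and UtU: "U\<^sup>T * U = 1\<^sub>m N"
    and eig: "\<forall>i<N. eigenvector C (col U i) (lam i)" and dN: "d \<le> N"
    and S_entry: "\<And>c k. c < d \<Longrightarrow> k < N \<Longrightarrow> S $$ (c,k) = U $$ (k,c)"
  shows "(\<Sum>c<d. quad_form N C (\<lambda>k. S $$ (c,k))) = (\<Sum>j<d. lam j)"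
proof (rule sum.cong[OF refl])
  fix c assume "c \<in> {..<d}"
  then have c: "c < d" "c < N" using dN by auto
  have "quad_form N C (\<lambda>k. S $$ (c,k)) = (\<Sum>j<N. if c = j then lam j else 0)"
    unfolding quad_form_eigenbasis[OF C U UtU eig]
    using c by (intro sum.cong refl) (simp add: S_entry orthonormal_columns[OF U UtU])
  then show "quad_form N C (\<lambda>k. S $$ (c,k)) = lam c"
    using c by simp
qed

theorem mainTheorem4:
  fixes N M d :: nat and K :: "nat \<Rightarrow> real mat" and \<epsilon> \<gamma> :: real
    and W :: "real mat" and U Shat :: "real mat" and lam :: "nat \<Rightarrow> real"
  assumes K: "\<forall>m\<in>{1..M}. sym_pos_def N (K m)"
    and eps: "\<epsilon> > 0" and gam: "\<gamma> \<ge> 0"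
    and W: "weighted_adj N W"
    and dN: "d \<le> N"
    and U: "U \<in> carrier_mat N N" "U\<^sup>T * U = 1\<^sub>m N"
    and eig: "\<forall>i<N. eigenvector (Cg N M K \<epsilon> \<gamma> (laplacian W)) (col U i) (lam i)"
    and sorted: "\<forall>i<N. \<forall>j<N. i \<le> j \<longrightarrow> lam j \<le> lam i"
    and Shat: "Shat\<^sup>T = mat N d (\<lambda>(i,j). U $$ (i,j))"
  shows "Shat * Shat\<^sup>T = 1\<^sub>m d \<and>
    (\<forall>A S. (\<forall>m\<in>{1..M}. A m \<in> carrier_mat N d) \<longrightarrow> S \<in> carrier_mat d N \<longrightarrow>
       S * S\<^sup>T = 1\<^sub>m d \<longrightarrow>
       gmcca_obj M K \<epsilon> \<gamma> (laplacian W)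
          (\<lambda>m. minv (K m + \<epsilon> \<cdot>\<^sub>m 1\<^sub>m N) * Shat\<^sup>T) Shat
       \<le> gmcca_obj M K \<epsilon> \<gamma> (laplacian W) A S)"
proof -
  define L where "L = laplacian W"
  have L: "L \<in> carrier_mat N N" using W unfolding L_def laplacian_def weighted_adj_def by auto
  have C: "Cg N M K \<epsilon> \<gamma> L \<in> carrier_mat N N" using L unfolding Cg_def by auto
  note eigC = eig[folded L_def]
  have "Shat = (mat N d (\<lambda>(i,j). U $$ (i,j)))\<^sup>T" by (metis Shat transpose_transpose)
  then have Sh: "Shat \<in> carrier_mat d N" and Sh_entry: "\<And>c k. c < d \<Longrightarrow> k < N \<Longrightarrow> Shat $$ (c,k) = U $$ (k,c)"
    by auto
  have ShSh: "Shat * Shat\<^sup>T = 1\<^sub>m d" by (rule leading_eigenvectors_orthonormal[OF U dN Sh Sh_entry])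
  have optimum: "gmcca_obj M K \<epsilon> \<gamma> L (\<lambda>m. minv (K m + \<epsilon> \<cdot>\<^sub>m 1\<^sub>m N) * Shat\<^sup>T) Shat
      = real M * real d - (\<Sum>j<d. lam j)"
    using gmcca_obj_ridge[OF K eps L Sh ShSh] trace_leading_eigenvectors[OF C U eigC dN Sh_entry]
    by simp
  have "real M * real d - (\<Sum>j<d. lam j) \<le> gmcca_obj M K \<epsilon> \<gamma> L A S"
    if "\<forall>m\<in>{1..M}. A m \<in> carrier_mat N d" "S \<in> carrier_mat d N" "S * S\<^sup>T = 1\<^sub>m d" for A S
    using gmcca_obj_ge[OF K eps L that(2,3,1), of \<gamma>] ky_fan_trace_le[OF C U eigC sorted dN that(2,3)]
    by linarith
  then show ?thesis using ShSh optimum unfolding L_def by auto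
qed

end
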